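(* Let there be $n$ buyers and $m$ datasets; buyer $i\in[n]$ has budget $b_i\in\mathbb{R}_{\ge0}$ and linear valuation $v_i(\mathbf{x})=\sum_{j=1}^m\tau_{i,j}x_j$ with $\tau_{i,j}\in\mathbb{R}_{\ge0}$. For $j\in[m]$ let $S_j=\{\tau_{i,j}:i\in[n]\}$. For each $j$ let $p_j:[0,1]\to\mathbb{R}_{\ge0}$ be a monotone lower-continuous pricing function (with $p_j(0)=0$), let $\hat p_j=\mathrm{disc}(\mathrm{conv}(p_j),S_j)$, and let $\mathbf{p}(\mathbf{x})=\sum_j p_j(x_j)$, $\hat{\mathbf{p}}(\mathbf{x})=\sum_j\hat p_j(x_j)$. Then $r(\hat{\mathbf{p}}\mid v_i,b_i)\ge r(\mathbf{p}\mid v_i,b_i)$ for every $i\in[n]$, and each $\hat p_j$ is monotone, continuous, convex and piecewise linear.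
   Context: Pricing function, $F$, $u^*$, $\mathrm{Dem}$ and revenue: a pricing function is a monotone $\mathbf{p}:[0,1]^m\to\mathbb{R}_{\ge0}$ with $\mathbf{p}(\mathbf{0})=0$; for valuation $v$ and budget $b\in\mathbb{R}_{\ge0}\cup\{\infty\}$, $F(\mathbf{p}\mid b)=\{\mathbf{x}:\mathbf{p}(\mathbf{x})\le b\}$, $u^*=\sup_{\mathbf{x}\in F}(v(\mathbf{x})-\mathbf{p}(\mathbf{x}))$, $\mathrm{Dem}(\mathbf{p}\mid v,b)=\{\mathbf{x}\in F: v(\mathbf{x})-\mathbf{p}(\mathbf{x})=u^*\}$, $r(\mathbf{p}\mid v,b)=\sup_{\mathbf{x}\in\mathrm{Dem}}\mathbf{p}(\mathbf{x})$. Lower-continuity of $f$ at $\hat x$: $f(\hat x)=\sup_{\delta>0}\inf_{|x-\hat x|\le\delta, x\in[0,1]}f(x)$. Convex hull of a function $f:[0,1]^m\to\mathbb{R}$: $\mathrm{conv}(f)(\mathbf{x})=\inf U_f(\mathbf{x})$, where $U_f(\mathbf{x})$ is the set of $y\in\mathbb{R}$ for which there exist $k\in\mathbb{N}$, $\lambda\in\Delta_k=\{\lambda\in[0,1]^k:\sum\lambda_i=1\}$, and $\mathbf{x}^{(1)},\dots,\mathbf{x}^{(k)}\in[0,1]^m$ with $\mathbf{x}=\sum_i\lambda_i\mathbf{x}^{(i)}$ and $y\ge\sum_i\lambda_if(\mathbf{x}^{(i)})$. For convex $f:[0,1]\to\mathbb{R}$, the left derivative is $f'(x)=\sup_{\delta\in(0,x]}(f(x)-f(x-\delta))/\delta$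 for $x\in(0,1]$ and $f'(0)=-\infty$; for $\beta\in\mathbb{R}$, $\ell(f\mid\beta)=\max\{x\in[0,1]:f'(x)\le\beta\}$. Piecewise-linear functions: for non-decreasing $\mathbf{z}\in[0,1]^{k-1}$ and $\boldsymbol\alpha\in\mathbb{R}^k$, with $z_0=0$, $\mathrm{plin}(\mathbf{z},\boldsymbol\alpha)$ is the function $f:[0,1]\to\mathbb{R}$ with $f(0)=0$ and, for $x>0$, $f(x)=\sum_{j=1}^{i-1}\alpha_j(z_j-z_{j-1})+\alpha_i(x-z_{i-1})$ where $i\in[k]$ is the largest index with $z_{i-1}<x$. Piecewise-linearization: for continuous convex $f:[0,1]\to\mathbb{R}$ and a finite set $S=\{\alpha_1<\dots<\alpha_k\}$, set $z_i=\ell(f\mid\alpha_i)$ for $i\in[k-1]$ and $\mathrm{disc}(f,S)=f(0)+\mathrm{plin}(\mathbf{z},\boldsymbol\alpha)$. *)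

theory Defs
  imports "HOL-Analysis.Analysis" "HOL-Library.Extended_Real"
begin

text \<open>Vectors in [0,1]^m are functions nat => real, with coordinates j < m in [0,1]
  and all other coordinates equal to 0.\<close>
definition cube :: "nat \<Rightarrow> (nat \<Rightarrow> real) set" where
  "cube m = {x. (\<forall>j<m. x j \<in> {0..1}) \<and> (\<forall>j\<ge>m. x j = 0)}"

definition feasible :: "((nat \<Rightarrow> real) \<Rightarrow> real) \<Rightarrow> nat \<Rightarrow> real \<Rightarrow> (nat \<Rightarrow> real) set" where
  "feasible P m b = {x \<in> cube m. P x \<le> b}"

definition ustar :: "((nat \<Rightarrow> real) \<Rightarrow> real) \<Rightarrow> ((nat \<Rightarrow> real) \<Rightarrow> real) \<Rightarrow> nat \<Rightarrow> real \<Rightarrow> real" where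
  "ustar P v m b = (SUP x\<in>feasible P m b. v x - P x)"

definition Dem :: "((nat \<Rightarrow> real) \<Rightarrow> real) \<Rightarrow> ((nat \<Rightarrow> real) \<Rightarrow> real) \<Rightarrow> nat \<Rightarrow> real \<Rightarrow> (nat \<Rightarrow> real) set" where
  "Dem P v m b = {x \<in> feasible P m b. v x - P x = ustar P v m b}"

definition revenue :: "((nat \<Rightarrow> real) \<Rightarrow> real) \<Rightarrow> ((nat \<Rightarrow> real) \<Rightarrow> real) \<Rightarrow> nat \<Rightarrow> real \<Rightarrow> real" where
  "revenue P v m b = (SUP x\<in>Dem P v m b. P x)"

definition lower_cont :: "(real \<Rightarrow> real) \<Rightarrow> bool" where
  "lower_cont f = (\<forall>xh\<in>{0..1}.
     f xh = (SUP \<delta>\<in>{0<..}. INF x\<in>{x\<in>{0..1}. \<bar>x - xh\<bar> \<le> \<delta>}. f x))"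

text \<open>Convex hull of a function on [0,1] (the case m = 1 of the general definition).\<close>
definition U_set :: "(real \<Rightarrow> real) \<Rightarrow> real \<Rightarrow> real set" where
  "U_set f x = {y. \<exists>(k::nat) (lam::nat \<Rightarrow> real) (xs::nat \<Rightarrow> real).
      (\<forall>i<k. lam i \<in> {0..1}) \<and> (\<Sum>i<k. lam i) = 1 \<and> (\<forall>i<k. xs i \<in> {0..1}) \<and>
      x = (\<Sum>i<k. lam i * xs i) \<and> y \<ge> (\<Sum>i<k. lam i * f (xs i))}"

definition convf :: "(real \<Rightarrow> real) \<Rightarrow> real \<Rightarrow> real" where
  "convf f x = Inf (U_set f x)"

definition lderiv :: "(real \<Rightarrow> real) \<Rightarrow> real \<Rightarrow> ereal" where
  "lderiv f x = (if x = 0 then -\<infinity> else (SUP \<delta>\<in>{0<..x}. ereal ((f x - f (x - \<delta>)) / \<delta>)))"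

definition ell :: "(real \<Rightarrow> real) \<Rightarrow> real \<Rightarrow> real" where
  "ell f \<beta> = (GREATEST x. x \<in> {0..1} \<and> lderiv f x \<le> ereal \<beta>)"

text \<open>plin(z, alpha) with k pieces: z 1..z (k-1) are the breakpoints (z 0 = 0 implicitly),
  alpha 1..alpha k are the slopes.\<close>
definition plin :: "nat \<Rightarrow> (nat \<Rightarrow> real) \<Rightarrow> (nat \<Rightarrow> real) \<Rightarrow> real \<Rightarrow> real" where
  "plin k z \<alpha> x = (if x = 0 then 0 else
     (let z' = (\<lambda>j. if j = 0 then 0 else z j);
          i = (GREATEST i. i \<in> {1..k} \<and> z' (i - 1) < x)
      in (\<Sum>j\<in>{1..<i}. \<alpha> j * (z' j - z' (j - 1))) + \<alpha> i * (x - z' (i - 1))))"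

text \<open>disc(f, S): alpha_i is the i-th smallest element of S, z_i = l(f | alpha_i) for i in [k-1].\<close>
definition disc :: "(real \<Rightarrow> real) \<Rightarrow> real set \<Rightarrow> real \<Rightarrow> real" where
  "disc f S x = f 0 + plin (card S)
      (\<lambda>i. ell f (sorted_list_of_set S ! (i - 1)))
      (\<lambda>i. sorted_list_of_set S ! (i - 1)) x"

definition piecewise_linear :: "(real \<Rightarrow> real) \<Rightarrow> bool" where
  "piecewise_linear f = (\<exists>k z \<alpha>. 1 \<le> k \<and> (\<forall>j\<in>{1..<k}. z j \<in> {0..1}) \<and>
      (\<forall>j1 j2. 1 \<le> j1 \<and> j1 \<le> j2 \<and> j2 < k \<longrightarrow> z j1 \<le> z j2) \<and>
      (\<forall>x\<in>{0..1}. f x = plin k z \<alpha> x))"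

end

theory Submission
  imports Defs
begin

(*
  Write c = convf p_j. A type-tau buyer's favourite quantity s of dataset j under p_j (a maximizer
  of tau y - p_j y) has a supporting line of slope tau below c, so the left derivative of c at s
  is at most tau and s lies left of the breakpoint ell(c | tau). The linearization phat_j is convex
  and has slope tau exactly on the segment ending at that breakpoint, and c <= phat_j at the
  breakpoints; hence the segment end t maximizes tau y - phat_j y and p_j s <= phat_j t.
  Consequently every bundle demanded under p costs at most min(b, phat(t)). Under the continuous
  convex phat the buyer's utility is concave, so either t is affordable and demanded, or walking
  from a demanded bundle towards t until the budget binds yields a demanded bundle of price b;
  either way the revenue under phat is at least min(b, phat(t)).
*)

section \<open>Piecewise-linear functions\<close>

definition plin_knot :: "(nat \<Rightarrow> real) \<Rightarrow> nat \<Rightarrow> real" where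
  "plin_knot z j = (if j = 0 then 0 else z j)"

text \<open>The affine function that \<open>plin k z \<alpha>\<close> agrees with on its \<open>i\<close>-th segment
  \<open>[plin_knot z (i - 1), plin_knot z i]\<close>; \<open>plin_knot\<close> supplies the implicit knot \<open>z 0 = 0\<close>.\<close>
definition plin_piece :: "(nat \<Rightarrow> real) \<Rightarrow> (nat \<Rightarrow> real) \<Rightarrow> nat \<Rightarrow> real \<Rightarrow> real" where
  "plin_piece z \<alpha> i x =
     (\<Sum>j\<in>{1..<i}. \<alpha> j * (plin_knot z j - plin_knot z (j - 1))) + \<alpha> i * (x - plin_knot z (i - 1))"

lemma plin_eq_Greatest_piece:
  "x \<noteq> 0 \<Longrightarrow> plin k z \<alpha> x = plin_piece z \<alpha> (GREATEST i. i \<in> {1..k} \<and> plin_knot z (i - 1) < x) x"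
  unfolding plin_def plin_piece_def plin_knot_def Let_def by simp

lemma plin_piece_shift: "plin_piece z \<alpha> i y = plin_piece z \<alpha> i x + \<alpha> i * (y - x)"
  unfolding plin_piece_def by (simp add: algebra_simps)

lemma plin_piece_Suc:
  "1 \<le> i \<Longrightarrow> plin_piece z \<alpha> (Suc i) x = plin_piece z \<alpha> i x + (\<alpha> (Suc i) - \<alpha> i) * (x - plin_knot z i)"
  unfolding plin_piece_def by (simp add: sum.atLeastLessThan_Suc algebra_simps)

lemma plin_piece_le_right:
  assumes "1 \<le> l" "l \<le> i" "\<forall>j\<in>{l..<i}. \<alpha> j \<le> \<alpha> (Suc j) \<and> plin_knot z j \<le> x"
  shows "plin_piece z \<alpha> l x \<le> plin_piece z \<alpha> i x"
  using assms(2,3)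
proof (induction i rule: dec_induct)
  case (step i)
  then have "0 \<le> (\<alpha> (Suc i) - \<alpha> i) * (x - plin_knot z i)" by simp
  moreover have "1 \<le> i" using \<open>1 \<le> l\<close> step.hyps by simp
  moreover have "plin_piece z \<alpha> l x \<le> plin_piece z \<alpha> i x" using step.IH step.prems by simp
  ultimately show ?case using plin_piece_Suc[of i z \<alpha> x] by linarith
qed simp

lemma plin_piece_le_left:
  assumes "1 \<le> i" "i \<le> l" "\<forall>j\<in>{i..<l}. \<alpha> j \<le> \<alpha> (Suc j) \<and> x \<le> plin_knot z j"
  shows "plin_piece z \<alpha> l x \<le> plin_piece z \<alpha> i x"
  using assms(2,3)
proof (induction l rule: dec_induct)
  case (step l)
  then have "(\<alpha> (Suc l) - \<alpha> l) * (x - plin_knot z l) \<le> 0" by (simp add: mult_nonneg_nonpos)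
  moreover have "1 \<le> l" using \<open>1 \<le> i\<close> step.hyps by simp
  moreover have "plin_piece z \<alpha> l x \<le> plin_piece z \<alpha> i x" using step.IH step.prems by simp
  ultimately show ?case using plin_piece_Suc[of l z \<alpha> x] by linarith
qed simp

locale monotone_plin =
  fixes k :: nat and z \<alpha> :: "nat \<Rightarrow> real"
  assumes one_le_k: "1 \<le> k"
    and knot_mono: "\<And>a b. a \<le> b \<Longrightarrow> b < k \<Longrightarrow> plin_knot z a \<le> plin_knot z b"
    and slope_mono: "\<And>a b. 1 \<le> a \<Longrightarrow> a \<le> b \<Longrightarrow> b \<le> k \<Longrightarrow> \<alpha> a \<le> \<alpha> b"
begin

definition on_segment :: "nat \<Rightarrow> real \<Rightarrow> bool" where
  "on_segment i x \<longleftrightarrow> i \<in> {1..k} \<and> plin_knot z (i - 1) \<le> x \<and> (i < k \<longrightarrow> x \<le> plin_knot z i)"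

lemma piece_le_segment_piece:
  assumes seg: "on_segment i x" and l: "l \<in> {1..k}"
  shows "plin_piece z \<alpha> l x \<le> plin_piece z \<alpha> i x"
proof (cases "l \<le> i")
  case True
  have "\<alpha> j \<le> \<alpha> (Suc j) \<and> plin_knot z j \<le> x" if "l \<le> j" "j < i" for j
  proof -
    have "plin_knot z j \<le> plin_knot z (i - 1)"
      using that seg by (intro knot_mono) (auto simp: on_segment_def)
    then show ?thesis using that seg l slope_mono[of j "Suc j"] by (auto simp: on_segment_def)
  qed
  then show ?thesis using True l by (intro plin_piece_le_right) auto
next
  case False
  have "\<alpha> j \<le> \<alpha> (Suc j) \<and> x \<le> plin_knot z j" if "i \<le> j" "j < l" for j
  proof -
    have "plin_knot z i \<le> plin_knot z j" using that l by (intro knot_mono) auto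
    then show ?thesis using that seg l slope_mono[of j "Suc j"] by (auto simp: on_segment_def)
  qed
  then show ?thesis using False seg by (intro plin_piece_le_left) (auto simp: on_segment_def)
qed

lemma plin_on_some_segment:
  assumes "0 \<le> x"
  obtains i where "on_segment i x" "plin k z \<alpha> x = plin_piece z \<alpha> i x"
proof (cases "x = 0")
  case True
  have "on_segment 1 x"
    using True one_le_k knot_mono[of 0 1] by (auto simp: on_segment_def plin_knot_def)
  moreover have "plin k z \<alpha> x = plin_piece z \<alpha> 1 x"
    using True by (simp add: plin_def plin_piece_def plin_knot_def)
  ultimately show thesis by (rule that)
next
  case False
  define P where "P = (\<lambda>i. i \<in> {1..k} \<and> plin_knot z (i - 1) < x)"
  define i where "i = Greatest P"
  have "P 1" using False assms one_le_k by (simp add: P_def plin_knot_def)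
  have bound: "P j \<Longrightarrow> j \<le> k" for j by (simp add: P_def)
  have "P i" unfolding i_def by (rule GreatestI_nat[of P 1 k]) (use \<open>P 1\<close> bound in auto)
  have greatest: "P j \<Longrightarrow> j \<le> i" for j unfolding i_def by (rule Greatest_le_nat[OF _ bound])
  have "i < k \<Longrightarrow> x \<le> plin_knot z i"
    using greatest[of "Suc i"] by (fastforce simp: P_def)
  then have "on_segment i x" using \<open>P i\<close> by (simp add: on_segment_def P_def)
  moreover have "plin k z \<alpha> x = plin_piece z \<alpha> i x"
    using plin_eq_Greatest_piece[OF False] by (simp add: i_def P_def)
  ultimately show thesis by (rule that)
qed

lemma piece_le_plin: "0 \<le> x \<Longrightarrow> l \<in> {1..k} \<Longrightarrow> plin_piece z \<alpha> l x \<le> plin k z \<alpha> x"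
  by (metis plin_on_some_segment piece_le_segment_piece)

lemma plin_eq_segment_piece:
  assumes seg: "on_segment i x" and "0 \<le> x"
  shows "plin k z \<alpha> x = plin_piece z \<alpha> i x"
proof -
  obtain g where g: "on_segment g x" "plin k z \<alpha> x = plin_piece z \<alpha> g x"
    using plin_on_some_segment[OF \<open>0 \<le> x\<close>] .
  have "plin_piece z \<alpha> g x \<le> plin_piece z \<alpha> i x" "plin_piece z \<alpha> i x \<le> plin_piece z \<alpha> g x"
    using piece_le_segment_piece seg g(1) by (auto simp: on_segment_def)
  then show ?thesis using g(2) by simp
qed

lemma plin_mono:
  assumes "0 \<le> \<alpha> 1"
  shows "mono_on {0..} (plin k z \<alpha>)"
proof (rule mono_onI)
  fix x y :: real assume "x \<in> {0..}" "y \<in> {0..}" "x \<le> y"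
  moreover obtain i where i: "on_segment i x" "plin k z \<alpha> x = plin_piece z \<alpha> i x"
    using plin_on_some_segment \<open>x \<in> {0..}\<close> by auto
  moreover have "0 \<le> \<alpha> i" using assms slope_mono[of 1 i] i(1) by (auto simp: on_segment_def)
  ultimately have "plin k z \<alpha> x \<le> plin_piece z \<alpha> i y" using plin_piece_shift[of z \<alpha> i y x] by simp
  also have "\<dots> \<le> plin k z \<alpha> y" using piece_le_plin i(1) \<open>y \<in> {0..}\<close> by (auto simp: on_segment_def)
  finally show "plin k z \<alpha> x \<le> plin k z \<alpha> y" .
qed

lemma plin_convex: "convex_on {0..} (plin k z \<alpha>)"
proof (rule convex_onI)
  fix t x y :: real assume t: "0 < t" "t < 1" and xy: "x \<in> {0..}" "y \<in> {0..}"
  define w where "w = (1 - t) * x + t * y"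
  obtain i where i: "on_segment i w" "plin k z \<alpha> w = plin_piece z \<alpha> i w"
    using plin_on_some_segment[of w] t xy by (auto simp: w_def)
  have "plin_piece z \<alpha> i w = (1 - t) * plin_piece z \<alpha> i x + t * plin_piece z \<alpha> i y"
    unfolding plin_piece_def w_def by (simp add: algebra_simps)
  also have "\<dots> \<le> (1 - t) * plin k z \<alpha> x + t * plin k z \<alpha> y"
    using piece_le_plin i(1) t xy by (intro add_mono mult_left_mono) (auto simp: on_segment_def)
  finally show "plin k z \<alpha> ((1 - t) *\<^sub>R x + t *\<^sub>R y) \<le> (1 - t) * plin k z \<alpha> x + t * plin k z \<alpha> y"
    using i by (simp add: w_def)
qed (simp add: convex_real_interval)

lemma plin_lipschitz: "(\<Sum>i\<in>{1..k}. \<bar>\<alpha> i\<bar>)-lipschitz_on {0..} (plin k z \<alpha>)"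
proof -
  have bound: "plin k z \<alpha> x - plin k z \<alpha> y \<le> (\<Sum>i\<in>{1..k}. \<bar>\<alpha> i\<bar>) * \<bar>x - y\<bar>"
    if xy: "x \<in> {0..}" "y \<in> {0..}" for x y
  proof -
    obtain i where i: "on_segment i x" "plin k z \<alpha> x = plin_piece z \<alpha> i x"
      using plin_on_some_segment xy by auto
    then have "i \<in> {1..k}" by (simp add: on_segment_def)
    have "plin k z \<alpha> x - plin k z \<alpha> y \<le> plin_piece z \<alpha> i x - plin_piece z \<alpha> i y"
      using piece_le_plin[of y i] i \<open>i \<in> {1..k}\<close> xy by simp
    also have "\<dots> = \<alpha> i * (x - y)" using plin_piece_shift[of z \<alpha> i x y] by simp
    also have "\<dots> \<le> \<bar>\<alpha> i\<bar> * \<bar>x - y\<bar>" by (metis abs_ge_self abs_mult)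
    also have "\<dots> \<le> (\<Sum>i\<in>{1..k}. \<bar>\<alpha> i\<bar>) * \<bar>x - y\<bar>"
      using \<open>i \<in> {1..k}\<close> by (intro mult_right_mono member_le_sum) auto
    finally show ?thesis .
  qed
  show ?thesis
  proof (rule lipschitz_onI)
    fix x y :: real assume "x \<in> {0..}" "y \<in> {0..}"
    then show "dist (plin k z \<alpha> x) (plin k z \<alpha> y) \<le> (\<Sum>i\<in>{1..k}. \<bar>\<alpha> i\<bar>) * dist x y"
      using bound[of x y] bound[of y x] by (simp add: dist_real_def abs_le_iff abs_minus_commute)
  qed (simp add: sum_nonneg)
qed

lemma plin_continuous: "continuous_on {0..} (plin k z \<alpha>)"
  by (rule lipschitz_on_continuous_on[OF plin_lipschitz])

lemma plin_piecewise_linear: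
  assumes "\<And>j. j \<in> {1..<k} \<Longrightarrow> z j \<le> 1"
  shows "piecewise_linear (plin k z \<alpha>)"
  unfolding piecewise_linear_def
proof (intro exI conjI ballI allI impI)
  fix j assume "j \<in> {1..<k}"
  then show "z j \<in> {0..1}" using assms knot_mono[of 0 j] by (auto simp: plin_knot_def)
next
  fix j1 j2 :: nat assume "1 \<le> j1 \<and> j1 \<le> j2 \<and> j2 < k"
  then show "z j1 \<le> z j2" using knot_mono[of j1 j2] by (simp add: plin_knot_def)
qed (use one_le_k in simp_all)

end

section \<open>Lower semicontinuity\<close>

definition lsc_on :: "'a::topological_space set \<Rightarrow> ('a \<Rightarrow> real) \<Rightarrow> bool" where
  "lsc_on K f \<longleftrightarrow> (\<forall>x\<in>K. \<forall>a<f x. \<forall>\<^sub>F y in at x within K. a < f y)"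

lemma lsc_onI: "(\<And>x a. x \<in> K \<Longrightarrow> a < f x \<Longrightarrow> \<forall>\<^sub>F y in at x within K. a < f y) \<Longrightarrow> lsc_on K f"
  by (simp add: lsc_on_def)

lemma lsc_onD: "lsc_on K f \<Longrightarrow> x \<in> K \<Longrightarrow> a < f x \<Longrightarrow> \<forall>\<^sub>F y in at x within K. a < f y"
  by (simp add: lsc_on_def)

lemma continuous_on_imp_lsc_on: "continuous_on K f \<Longrightarrow> lsc_on K f"
  by (auto intro!: lsc_onI order_tendstoD(1) simp: continuous_on_def)

lemma lsc_on_subset: "lsc_on K f \<Longrightarrow> L \<subseteq> K \<Longrightarrow> lsc_on L f"
  unfolding lsc_on_def by (meson at_le filter_leD subsetD)

lemma lsc_on_add:
  assumes f: "lsc_on K f" and g: "lsc_on K g"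
  shows "lsc_on K (\<lambda>x. f x + g x)"
proof (rule lsc_onI)
  fix x a assume x: "x \<in> K" and a: "a < f x + g x"
  define d where "d = (f x + g x - a) / 2"
  have "\<forall>\<^sub>F y in at x within K. f x - d < f y" "\<forall>\<^sub>F y in at x within K. g x - d < g y"
    using lsc_onD[OF f x] lsc_onD[OF g x] a by (auto simp: d_def)
  then show "\<forall>\<^sub>F y in at x within K. a < f y + g y"
    by eventually_elim (simp add: d_def field_simps)
qed

lemma lsc_on_sum:
  "finite I \<Longrightarrow> (\<And>i. i \<in> I \<Longrightarrow> lsc_on K (f i)) \<Longrightarrow> lsc_on K (\<lambda>x. \<Sum>i\<in>I. f i x)"
  by (induction I rule: finite_induct)
    (auto intro: lsc_on_add continuous_on_imp_lsc_on[OF continuous_on_const])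

lemma lsc_on_compose:
  assumes f: "lsc_on L f" and h: "continuous_on K h" and hK: "h ` K \<subseteq> L"
  shows "lsc_on K (\<lambda>x. f (h x))"
proof (rule lsc_onI)
  fix x a assume x: "x \<in> K" and a: "a < f (h x)"
  have "\<forall>\<^sub>F z in at (h x) within L. a < f z"
    using lsc_onD[OF f _ a] hK x by auto
  then have "\<forall>\<^sub>F z in nhds (h x). z \<in> L \<longrightarrow> a < f z"
    unfolding eventually_at_filter using a by (auto elim!: eventually_mono)
  moreover have "(h \<longlongrightarrow> h x) (at x within K)"
    using h x by (simp add: continuous_on_def)
  ultimately have "\<forall>\<^sub>F y in at x within K. h y \<in> L \<longrightarrow> a < f (h y)"
    by (rule eventually_compose_filterlim)
  moreover have "\<forall>\<^sub>F y in at x within K. h y \<in> L"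
    unfolding eventually_at_filter using hK by (intro always_eventually) auto
  ultimately show "\<forall>\<^sub>F y in at x within K. a < f (h y)"
    by eventually_elim simp
qed

lemma closed_lsc_sublevel:
  assumes f: "lsc_on K f" and K: "closed K"
  shows "closed {x \<in> K. f x \<le> a}"
  unfolding closed_limpt
proof (intro allI impI)
  fix x assume lim: "x islimpt {x \<in> K. f x \<le> a}"
  then have "x \<in> K"
    using K closed_limpt islimpt_subset by (metis (no_types, lifting) mem_Collect_eq subsetI)
  moreover have "f x \<le> a"
  proof (rule ccontr)
    assume "\<not> f x \<le> a"
    then have "\<forall>\<^sub>F y in at x within K. a < f y" using lsc_onD[OF f \<open>x \<in> K\<close>] by simp
    then have "\<forall>\<^sub>F y in at x. y \<notin> {x \<in> K. f x \<le> a}"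
      by (auto simp: eventually_at_filter elim: eventually_mono)
    then show False using lim by (simp add: islimpt_iff_eventually)
  qed
  ultimately show "x \<in> {x \<in> K. f x \<le> a}" by simp
qed

lemma lsc_on_attains_inf:
  fixes f :: "'a::t2_space \<Rightarrow> real"
  assumes K: "compact K" "K \<noteq> {}" and f: "lsc_on K f"
  shows "\<exists>x\<in>K. \<forall>y\<in>K. f x \<le> f y"
proof -
  have "K \<inter> (\<Inter>y\<in>K. {x \<in> K. f x \<le> f y}) \<noteq> {}"
  proof (rule compact_imp_fip_image[OF K(1)])
    show "closed {x \<in> K. f x \<le> f y}" for y
      by (rule closed_lsc_sublevel[OF f compact_imp_closed[OF K(1)]])
    fix I assume I: "finite I" "I \<subseteq> K"
    show "K \<inter> (\<Inter>y\<in>I. {x \<in> K. f x \<le> f y}) \<noteq> {}"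
    proof (cases "I = {}")
      case True then show ?thesis using K(2) by simp
    next
      case False
      have "Min (f ` I) \<in> f ` I" using I(1) False by simp
      then obtain x where "x \<in> I" "f x = Min (f ` I)" by auto
      then have "x \<in> I" "\<forall>y\<in>I. f x \<le> f y" using I(1) by auto
      then show ?thesis using I(2) by blast
    qed
  qed
  then show ?thesis by blast
qed

lemma lower_contD:
  assumes lc: "lower_cont f" and bdd: "bdd_below (f ` {0..1})" and x: "x \<in> {0..1}" and e: "0 < e"
  shows "\<exists>d>0. \<forall>y\<in>{0..1}. \<bar>y - x\<bar> \<le> d \<longrightarrow> f x - e < f y"
proof -
  define g where "g d = (INF y\<in>{y\<in>{0..1}. \<bar>y - x\<bar> \<le> d}. f y)" for d
  have bdd_d: "bdd_below (f ` {y\<in>{0..1}. \<bar>y - x\<bar> \<le> d})" for d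
    using bdd by (rule bdd_below_mono) auto
  have g_le: "g d \<le> f x" if "0 < d" for d
    unfolding g_def by (rule cINF_lower[OF bdd_d]) (use x that in auto)
  have "f x - e < (SUP d\<in>{0<..}. g d)"
    using lc x e unfolding lower_cont_def g_def by simp
  moreover have "bdd_above (g ` {0<..})" using g_le by (intro bdd_aboveI[where M="f x"]) auto
  ultimately obtain d where d: "0 < d" "f x - e < g d"
    using less_cSUP_iff[of "{0<..}" g] by auto
  have "g d \<le> f y" if "y \<in> {0..1}" "\<bar>y - x\<bar> \<le> d" for y
    unfolding g_def by (rule cINF_lower[OF bdd_d]) (use that in auto)
  then show ?thesis using d by force
qed

lemma lower_cont_imp_lsc_on:
  assumes "lower_cont f" "bdd_below (f ` {0..1})"
  shows "lsc_on {0..1} f"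
proof (rule lsc_onI)
  fix x a assume x: "x \<in> {0..1}" and a: "a < f x"
  obtain d where "0 < d" "\<forall>y\<in>{0..1}. \<bar>y - x\<bar> \<le> d \<longrightarrow> f x - (f x - a) < f y"
    using lower_contD[OF assms x, of "f x - a"] a by auto
  then show "\<forall>\<^sub>F y in at x within {0..1}. a < f y"
    unfolding eventually_at by (auto simp: dist_real_def intro!: exI[of _ d])
qed

section \<open>The convex minorant\<close>

lemma U_setI:
  fixes k :: nat and lam xs :: "nat \<Rightarrow> real"
  assumes "\<forall>i<k. lam i \<in> {0..1}" "(\<Sum>i<k. lam i) = 1" "\<forall>i<k. xs i \<in> {0..1}"
    "x = (\<Sum>i<k. lam i * xs i)" "(\<Sum>i<k. lam i * f (xs i)) \<le> y"
  shows "y \<in> U_set f x"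
  unfolding U_set_def using assms by blast

lemma U_set_self: "x \<in> {0..1} \<Longrightarrow> f x \<in> U_set f x"
  by (rule U_setI[of 1 "\<lambda>_. 1" "\<lambda>_. x"]) (auto simp: lessThan_Suc)

lemma affine_minorant_le_U_set:
  assumes minorant: "\<forall>w\<in>{0..1}. a + b * w \<le> f w" and y: "y \<in> U_set f x"
  shows "a + b * x \<le> y"
proof -
  obtain k :: nat and lam xs :: "nat \<Rightarrow> real" where k: "\<forall>i<k. lam i \<in> {0..1}" "(\<Sum>i<k. lam i) = 1"
      "\<forall>i<k. xs i \<in> {0..1}" "x = (\<Sum>i<k. lam i * xs i)" "(\<Sum>i<k. lam i * f (xs i)) \<le> y"
    using y unfolding U_set_def by blast
  have "a + b * x = (\<Sum>i<k. lam i * (a + b * xs i))"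
    using k(2,4) by (simp add: algebra_simps sum.distrib flip: sum_distrib_left sum_distrib_right)
  also have "\<dots> \<le> (\<Sum>i<k. lam i * f (xs i))"
    using k minorant by (intro sum_mono mult_left_mono) auto
  also have "\<dots> \<le> y" using k by simp
  finally show ?thesis .
qed

lemma sum_lessThan_add_if:
  "(\<Sum>i<m + n. if i < m then a i else b (i - m)) = (\<Sum>i<m. a i) + (\<Sum>i<n. b i)"
  for a b :: "nat \<Rightarrow> real"
  by (induction n) auto

lemma U_set_convex_comb:
  assumes y1: "y1 \<in> U_set f x1" and y2: "y2 \<in> U_set f x2" and t: "t \<in> {0..1}"
  shows "(1 - t) * y1 + t * y2 \<in> U_set f ((1 - t) * x1 + t * x2)"
proof -
  obtain k1 :: nat and lam1 xs1 :: "nat \<Rightarrow> real" where k1: "\<forall>i<k1. lam1 i \<in> {0..1}"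
      "(\<Sum>i<k1. lam1 i) = 1" "\<forall>i<k1. xs1 i \<in> {0..1}" "x1 = (\<Sum>i<k1. lam1 i * xs1 i)"
      "(\<Sum>i<k1. lam1 i * f (xs1 i)) \<le> y1"
    using y1 unfolding U_set_def by blast
  obtain k2 :: nat and lam2 xs2 :: "nat \<Rightarrow> real" where k2: "\<forall>i<k2. lam2 i \<in> {0..1}"
      "(\<Sum>i<k2. lam2 i) = 1" "\<forall>i<k2. xs2 i \<in> {0..1}" "x2 = (\<Sum>i<k2. lam2 i * xs2 i)"
      "(\<Sum>i<k2. lam2 i * f (xs2 i)) \<le> y2"
    using y2 unfolding U_set_def by blast
  define lam where "lam i = (if i < k1 then (1 - t) * lam1 i else t * lam2 (i - k1))" for i
  define xs where "xs i = (if i < k1 then xs1 i else xs2 (i - k1))" for i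
  have pointwise: "lam i * g (xs i) = (if i < k1 then (1 - t) * (lam1 i * g (xs1 i))
      else t * (lam2 (i - k1) * g (xs2 (i - k1))))" for i g
    by (simp add: lam_def xs_def)
  have split: "(\<Sum>i<k1 + k2. lam i * g (xs i)) =
      (1 - t) * (\<Sum>i<k1. lam1 i * g (xs1 i)) + t * (\<Sum>i<k2. lam2 i * g (xs2 i))" for g
    using sum_lessThan_add_if[where m=k1 and n=k2 and a="\<lambda>i. (1 - t) * (lam1 i * g (xs1 i))"
        and b="\<lambda>i. t * (lam2 i * g (xs2 i))"]
    unfolding pointwise by (simp add: sum_distrib_left)
  show ?thesis
  proof (rule U_setI[of "k1 + k2" lam xs])
    show "\<forall>i<k1 + k2. lam i \<in> {0..1}" "\<forall>i<k1 + k2. xs i \<in> {0..1}"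
      using k1(1,3) k2(1,3) t by (auto simp: lam_def xs_def intro: mult_le_one)
    show "(\<Sum>i<k1 + k2. lam i) = 1"
      using split[of "\<lambda>_. 1"] k1(2) k2(2) by simp
    show "(1 - t) * x1 + t * x2 = (\<Sum>i<k1 + k2. lam i * xs i)"
      using split[of id] k1(4) k2(4) by simp
    show "(\<Sum>i<k1 + k2. lam i * f (xs i)) \<le> (1 - t) * y1 + t * y2"
      using split[of f] k1(5) k2(5) t by (auto intro!: add_mono mult_left_mono)
  qed
qed

lemma convf_ge_affine_minorant:
  assumes minorant: "\<forall>w\<in>{0..1}. a + b * w \<le> f w" and x: "x \<in> {0..1}"
  shows "a + b * x \<le> convf f x"
  unfolding convf_def
  by (rule cInf_greatest) (use U_set_self[OF x] affine_minorant_le_U_set[OF minorant] in auto)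

lemma convf_greatest:
  assumes "x \<in> {0..1}" "\<And>y. y \<in> U_set f x \<Longrightarrow> c \<le> y"
  shows "c \<le> convf f x"
  unfolding convf_def by (rule cInf_greatest) (use assms U_set_self in auto)

lemma convf_le_U_set:
  assumes bdd: "\<forall>w\<in>{0..1}. a \<le> f w" and y: "y \<in> U_set f x"
  shows "convf f x \<le> y"
proof -
  have "bdd_below (U_set f x)"
    using affine_minorant_le_U_set[of a 0 f] bdd by (auto simp: bdd_below_def)
  then show ?thesis unfolding convf_def by (rule cInf_lower[OF y])
qed

lemma convf_le: "\<forall>w\<in>{0..1}. a \<le> f w \<Longrightarrow> x \<in> {0..1} \<Longrightarrow> convf f x \<le> f x"
  by (rule convf_le_U_set[OF _ U_set_self])

lemma convex_on_convf:
  assumes bdd: "\<forall>w\<in>{0..1}. a \<le> f w"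
  shows "convex_on {0..1} (convf f)"
proof (rule convex_onI)
  fix t x1 x2 :: real assume t: "0 < t" "t < 1" and x: "x1 \<in> {0..1}" "x2 \<in> {0..1}"
  let ?x = "(1 - t) * x1 + t * x2"
  have comb: "convf f ?x \<le> (1 - t) * y1 + t * y2" if "y1 \<in> U_set f x1" "y2 \<in> U_set f x2" for y1 y2
    using convf_le_U_set[OF bdd U_set_convex_comb[OF that, of t]] t by auto
  have "(convf f ?x - t * y2) / (1 - t) \<le> convf f x1" if y2: "y2 \<in> U_set f x2" for y2
    using comb[OF _ y2] t by (intro convf_greatest[OF x(1)]) (simp add: divide_le_eq algebra_simps)
  then have "(convf f ?x - (1 - t) * convf f x1) / t \<le> convf f x2"
    using t by (intro convf_greatest[OF x(2)]) (simp add: divide_le_eq le_divide_eq algebra_simps)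
  then show "convf f ((1 - t) *\<^sub>R x1 + t *\<^sub>R x2) \<le> (1 - t) * convf f x1 + t * convf f x2"
    using t by (simp add: divide_le_eq algebra_simps)
qed (simp add: convex_real_interval)

locale pricing_function =
  fixes p :: "real \<Rightarrow> real"
  assumes mono: "mono_on {0..1} p" and zero: "p 0 = 0" and lower_cont: "lower_cont p"
begin

lemma nonneg: "\<forall>x\<in>{0..1}. 0 \<le> p x"
  using mono_onD[OF mono, of 0] zero by auto

lemma lsc: "lsc_on {0..1} p"
  using lower_cont nonneg by (intro lower_cont_imp_lsc_on) (auto intro: bdd_belowI)

lemma convf_nonneg: "x \<in> {0..1} \<Longrightarrow> 0 \<le> convf p x"
  using convf_ge_affine_minorant[of 0 0 p] nonneg by simp

lemma convf_le_self: "x \<in> {0..1} \<Longrightarrow> convf p x \<le> p x"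
  by (rule convf_le[OF nonneg])

lemma convf_zero: "convf p 0 = 0"
  using convf_le_self[of 0] convf_nonneg[of 0] zero by simp

lemma convex_convf: "convex_on {0..1} (convf p)"
  by (rule convex_on_convf[OF nonneg])

lemma convf_le_linear:
  assumes "x \<in> {0..1}"
  shows "convf p x \<le> x * p 1"
proof -
  have "convf p x \<le> x * convf p 1"
    using convex_onD[OF convex_convf, of x 0 1] assms convf_zero by simp
  also have "\<dots> \<le> x * p 1" using convf_le_self[of 1] assms by (simp add: mult_left_mono)
  finally show ?thesis .
qed

text \<open>The line through \<open>(y, 0)\<close> and \<open>(1, p y)\<close> is an affine minorant of the monotone,
  nonnegative \<open>p\<close>; letting \<open>y \<rightarrow> 1\<close> pins down \<open>convf p\<close> near \<open>1\<close>.\<close>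
lemma chord_le_convf:
  assumes y: "y \<in> {0..<1}" and x: "x \<in> {0..1}"
  shows "p y * (x - y) / (1 - y) \<le> convf p x"
proof -
  have chord: "p y * (w - y) / (1 - y) = - (p y * y / (1 - y)) + p y / (1 - y) * w" for w
    by (simp add: diff_divide_distrib right_diff_distrib algebra_simps)
  have "\<forall>w\<in>{0..1}. - (p y * y / (1 - y)) + p y / (1 - y) * w \<le> p w"
  proof
    fix w :: real assume w: "w \<in> {0..1}"
    show "- (p y * y / (1 - y)) + p y / (1 - y) * w \<le> p w"
    proof (cases "y \<le> w")
      case True
      have "(w - y) / (1 - y) \<le> 1" using w y by simp
      then have "p y * ((w - y) / (1 - y)) \<le> p y"
        using y nonneg by (intro mult_left_le) auto
      then have "p y * (w - y) / (1 - y) \<le> p y" by simp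
      also have "p y \<le> p w" using mono_onD[OF mono] True w y by auto
      finally show ?thesis by (simp add: chord)
    next
      case False
      then have "(w - y) / (1 - y) \<le> 0" using y by (intro divide_nonpos_pos) auto
      then have "p y * ((w - y) / (1 - y)) \<le> 0"
        using y nonneg by (intro mult_nonneg_nonpos) auto
      moreover have "0 \<le> p w" using nonneg w by simp
      ultimately show ?thesis using chord[of w] by simp
    qed
  qed
  from convf_ge_affine_minorant[OF this x] show ?thesis by (simp add: chord)
qed

lemma exists_near_one_above:
  assumes "a < p 1"
  obtains y where "y \<in> {0..<1}" "a < p y"
proof -
  have "bdd_below (p ` {0..1})" using nonneg by (auto intro: bdd_belowI)
  then obtain d where d: "0 < d" "\<forall>y\<in>{0..1}. \<bar>y - 1\<bar> \<le> d \<longrightarrow> p 1 - (p 1 - a) < p y"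
    using lower_contD[OF lower_cont _ _, of 1 "p 1 - a"] assms by auto
  show thesis by (rule that[of "1 - min d (1/2)"]) (use d in auto)
qed

lemma convf_one: "convf p 1 = p 1"
proof (rule antisym)
  show "convf p 1 \<le> p 1" by (rule convf_le_self) simp
  show "p 1 \<le> convf p 1"
  proof (rule dense_le)
    fix a assume "a < p 1"
    then obtain y where "y \<in> {0..<1}" "a < p y" by (rule exists_near_one_above)
    then show "a \<le> convf p 1" using chord_le_convf[of y 1] by simp
  qed
qed

lemma convf_tendsto_zero: "(convf p \<longlongrightarrow> convf p 0) (at 0 within {0..1})"
proof (rule tendsto_sandwich[of "\<lambda>_. 0" _ _ "\<lambda>y. y * p 1"])
  have near: "\<forall>\<^sub>F y in at 0 within {0..1}. y \<in> {0..1}" by (simp add: eventually_at_filter)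
  show "\<forall>\<^sub>F y in at 0 within {0..1}. 0 \<le> convf p y"
    using near by (rule eventually_mono) (rule convf_nonneg)
  show "\<forall>\<^sub>F y in at 0 within {0..1}. convf p y \<le> y * p 1"
    using near by (rule eventually_mono) (rule convf_le_linear)
  show "((\<lambda>_. 0) \<longlongrightarrow> convf p 0) (at 0 within {0..1})" by (simp add: convf_zero)
  have "((\<lambda>y. y * p 1) \<longlongrightarrow> 0 * p 1) (at 0 within {0..1})" by (intro tendsto_intros)
  then show "((\<lambda>y. y * p 1) \<longlongrightarrow> convf p 0) (at 0 within {0..1})" by (simp add: convf_zero)
qed

lemma convf_tendsto_one: "(convf p \<longlongrightarrow> convf p 1) (at 1 within {0..1})"
proof (rule order_tendstoI)
  have near: "\<forall>\<^sub>F y in at 1 within {0..1}. y \<in> {0..1}" by (simp add: eventually_at_filter)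
  fix a assume "convf p 1 < a"
  then have "p 1 < a" by (simp add: convf_one)
  have "convf p y < a" if "y \<in> {0..1}" for y
  proof -
    have "convf p y \<le> y * p 1" using that by (rule convf_le_linear)
    also have "\<dots> \<le> p 1" using that nonneg by (simp add: mult_left_le_one_le)
    finally show ?thesis using \<open>p 1 < a\<close> by simp
  qed
  with near show "\<forall>\<^sub>F y in at 1 within {0..1}. convf p y < a" by (rule eventually_mono)
next
  have near: "\<forall>\<^sub>F y in at 1 within {0..1}. y \<in> {0..1}" by (simp add: eventually_at_filter)
  fix a assume "a < convf p 1"
  then obtain y0 where y0: "y0 \<in> {0..<1}" "a < p y0" using convf_one exists_near_one_above by auto
  have "((\<lambda>y. p y0 * (y - y0) / (1 - y0)) \<longlongrightarrow> p y0 * (1 - y0) / (1 - y0)) (at 1 within {0..1})"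
    using y0(1) by (intro tendsto_intros) auto
  then have "((\<lambda>y. p y0 * (y - y0) / (1 - y0)) \<longlongrightarrow> p y0) (at 1 within {0..1})"
    using y0(1) by simp
  then have "\<forall>\<^sub>F y in at 1 within {0..1}. a < p y0 * (y - y0) / (1 - y0)"
    using y0(2) by (rule order_tendstoD(1))
  with near show "\<forall>\<^sub>F y in at 1 within {0..1}. a < convf p y"
    by eventually_elim (rule order.strict_trans2[OF _ chord_le_convf[OF y0(1)]])
qed

lemma continuous_on_convf: "continuous_on {0..1} (convf p)"
  unfolding continuous_on_def
proof
  fix x :: real assume "x \<in> {0..1}"
  then consider "x = 0" | "x = 1" | "x \<in> {0<..<1}" by fastforce
  then show "(convf p \<longlongrightarrow> convf p x) (at x within {0..1})"
  proof cases
    case 3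
    have "convex_on {0<..<1} (convf p)" by (rule convex_on_subset[OF convex_convf]) auto
    then have "continuous_on {0<..<1} (convf p)" by (intro convex_on_continuous) auto
    then have "isCont (convf p) x" using 3 by (simp add: continuous_on_eq_continuous_at)
    then show ?thesis by (simp add: continuous_at_imp_continuous_within flip: continuous_within)
  qed (use convf_tendsto_zero convf_tendsto_one in simp_all)
qed

end

section \<open>Left derivatives and breakpoints\<close>

lemma lderiv_le_iff:
  assumes "0 \<le> x"
  shows "lderiv f x \<le> ereal \<beta> \<longleftrightarrow> (\<forall>y\<in>{0..<x}. f x - f y \<le> \<beta> * (x - y))"
proof (cases "x = 0")
  case False
  have "lderiv f x \<le> ereal \<beta> \<longleftrightarrow> (\<forall>\<delta>\<in>{0<..x}. (f x - f (x - \<delta>)) / \<delta> \<le> \<beta>)"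
    using False by (simp add: lderiv_def SUP_le_iff)
  also have "\<dots> \<longleftrightarrow> (\<forall>\<delta>\<in>{0<..x}. f x - f (x - \<delta>) \<le> \<beta> * \<delta>)"
    by (intro ball_cong refl) (simp add: pos_divide_le_eq)
  also have "\<dots> \<longleftrightarrow> (\<forall>y\<in>{0..<x}. f x - f y \<le> \<beta> * (x - y))"
  proof (intro iffI ballI)
    fix y assume "\<forall>\<delta>\<in>{0<..x}. f x - f (x - \<delta>) \<le> \<beta> * \<delta>" "y \<in> {0..<x}"
    then show "f x - f y \<le> \<beta> * (x - y)" by (drule_tac bspec[of _ _ "x - y"]) auto
  next
    fix \<delta> assume "\<forall>y\<in>{0..<x}. f x - f y \<le> \<beta> * (x - y)" "\<delta> \<in> {0<..x}"
    then show "f x - f (x - \<delta>) \<le> \<beta> * \<delta>" by (drule_tac bspec[of _ _ "x - \<delta>"]) auto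
  qed
  finally show ?thesis .
qed (simp add: lderiv_def)

lemma chord_le_of_lderiv_le:
  "0 \<le> y \<Longrightarrow> y < x \<Longrightarrow> lderiv f x \<le> ereal \<beta> \<Longrightarrow> f x - f y \<le> \<beta> * (x - y)"
  using lderiv_le_iff[of x f \<beta>] by auto

lemma lderiv_le_of_maximizer:
  assumes s: "s \<in> {0..1}" and max: "\<forall>y\<in>{0..1}. \<tau> * y - f y \<le> \<tau> * s - f s"
  shows "lderiv f s \<le> ereal \<tau>"
proof -
  have "f s - f y \<le> \<tau> * (s - y)" if "y \<in> {0..<s}" for y
    using max that s by (force simp: algebra_simps)
  then show ?thesis using s by (simp add: lderiv_le_iff)
qed

lemma closed_lderiv_le:
  assumes f: "continuous_on {0..1} f"
  shows "closed {x\<in>{0..1}. lderiv f x \<le> ereal \<beta>}"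
proof -
  have "{x\<in>{0..1}. lderiv f x \<le> ereal \<beta>} =
      (\<Inter>y\<in>{0..1}. {x\<in>{0..1}. x \<le> y} \<union> {x\<in>{0..1}. f x - \<beta> * x \<le> f y - \<beta> * y})"
    (is "?L = ?R")
  proof (intro set_eqI iffI)
    fix x assume "x \<in> ?L"
    then have x: "x \<in> {0..1}" and chord: "\<forall>y\<in>{0..<x}. f x - f y \<le> \<beta> * (x - y)"
      by (auto simp: lderiv_le_iff)
    have "x \<le> y \<or> f x - \<beta> * x \<le> f y - \<beta> * y" if "y \<in> {0..1}" for y
    proof (cases "x \<le> y")
      case False
      then have "f x - f y \<le> \<beta> * (x - y)" using chord that by auto
      then show ?thesis by (simp add: right_diff_distrib)
    qed simp
    then show "x \<in> ?R" using x by auto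
  next
    fix x assume R: "x \<in> ?R"
    have "x \<in> {x\<in>{0..1}. x \<le> 0} \<union> {x\<in>{0..1}. f x - \<beta> * x \<le> f 0 - \<beta> * 0}"
      using R by (rule INT_D) simp
    then have x: "x \<in> {0..1}" by blast
    have "f x - f y \<le> \<beta> * (x - y)" if y: "y \<in> {0..<x}" for y
    proof -
      have "x \<in> {x\<in>{0..1}. x \<le> y} \<union> {x\<in>{0..1}. f x - \<beta> * x \<le> f y - \<beta> * y}"
        using R by (rule INT_D) (use x y in simp)
      then have "f x - \<beta> * x \<le> f y - \<beta> * y" using y by auto
      then show ?thesis by (simp add: right_diff_distrib)
    qed
    then show "x \<in> ?L" using x by (simp add: lderiv_le_iff)
  qed
  moreover have "closed {x\<in>{0..1}. x \<le> y} \<and> closed {x\<in>{0..1}. f x - \<beta> * x \<le> f y - \<beta> * y}" for y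
    by (intro conjI continuous_on_closed_Collect_le continuous_intros f)
  ultimately show ?thesis by (simp add: closed_INT closed_Un)
qed

lemma ell_greatest:
  assumes f: "continuous_on {0..1} f"
  shows "ell f \<beta> \<in> {0..1}" "lderiv f (ell f \<beta>) \<le> ereal \<beta>"
    "\<And>x. x \<in> {0..1} \<Longrightarrow> lderiv f x \<le> ereal \<beta> \<Longrightarrow> x \<le> ell f \<beta>"
proof -
  define A where "A = {x\<in>{0..1}. lderiv f x \<le> ereal \<beta>}"
  have "0 \<in> A" by (simp add: A_def lderiv_def)
  have bdd: "bdd_above A" unfolding A_def by (rule bdd_aboveI[where M=1]) simp
  have "closed A" unfolding A_def by (rule closed_lderiv_le[OF f])
  have "Sup A \<in> A" using \<open>0 \<in> A\<close> bdd \<open>closed A\<close> by (intro closed_contains_Sup) auto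
  moreover have "x \<le> Sup A" if "x \<in> A" for x by (rule cSup_upper[OF that bdd])
  ultimately have "ell f \<beta> = Sup A"
    unfolding ell_def by (intro Greatest_equality) (simp_all add: A_def)
  with \<open>Sup A \<in> A\<close> \<open>\<And>x. x \<in> A \<Longrightarrow> x \<le> Sup A\<close>
  show "ell f \<beta> \<in> {0..1}" "lderiv f (ell f \<beta>) \<le> ereal \<beta>"
    "\<And>x. x \<in> {0..1} \<Longrightarrow> lderiv f x \<le> ereal \<beta> \<Longrightarrow> x \<le> ell f \<beta>"
    by (auto simp: A_def)
qed

section \<open>Linearizing the convex minorant\<close>

locale linearized_pricing = pricing_function p for p +
  fixes S :: "real set"
  assumes finite_S: "finite S" and S_ne: "S \<noteq> {}" and S_nonneg: "\<forall>a\<in>S. 0 \<le> a"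
begin

definition k :: nat where "k = card S"

definition slope :: "nat \<Rightarrow> real" where "slope l = sorted_list_of_set S ! (l - 1)"

definition knot :: "nat \<Rightarrow> real" where "knot l = ell (convf p) (slope l)"

lemma disc_eq_plin: "disc (convf p) S = plin k knot slope"
  unfolding disc_def k_def knot_def slope_def by (simp add: convf_zero)

lemma disc_zero: "disc (convf p) S 0 = 0"
  by (simp add: disc_eq_plin plin_def)

lemma length_sorted_S: "length (sorted_list_of_set S) = k"
  by (simp add: k_def)

lemma one_le_k: "1 \<le> k"
  using finite_S S_ne by (simp add: k_def Suc_le_eq card_gt_0_iff)

lemma slope_mono: "1 \<le> a \<Longrightarrow> a \<le> b \<Longrightarrow> b \<le> k \<Longrightarrow> slope a \<le> slope b"
  unfolding slope_def using length_sorted_S by (intro sorted_nth_mono) auto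

lemma slope_range: "slope ` {1..k} = S"
proof -
  have "slope ` {1..k} = (\<lambda>i. sorted_list_of_set S ! i) ` {..<k}"
    unfolding image_Suc_lessThan[symmetric] image_image slope_def by simp
  also have "\<dots> = set (sorted_list_of_set S)"
    by (auto simp: set_conv_nth k_def)
  finally show ?thesis using finite_S by simp
qed

lemma slope_nonneg: "l \<in> {1..k} \<Longrightarrow> 0 \<le> slope l"
  using slope_range S_nonneg by blast

lemma knot_greatest:
  "knot l \<in> {0..1}" "lderiv (convf p) (knot l) \<le> ereal (slope l)"
  "x \<in> {0..1} \<Longrightarrow> lderiv (convf p) x \<le> ereal (slope l) \<Longrightarrow> x \<le> knot l"
  unfolding knot_def using ell_greatest[OF continuous_on_convf] by auto

lemma plin_knot_in_unit: "plin_knot knot j \<in> {0..1}"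
  using knot_greatest(1) by (simp add: plin_knot_def)

lemma plin_knot_mono: "a \<le> b \<Longrightarrow> b < k \<Longrightarrow> plin_knot knot a \<le> plin_knot knot b"
proof (cases "a = 0")
  case False
  assume ab: "a \<le> b" "b < k"
  then have "ereal (slope a) \<le> ereal (slope b)" using False slope_mono by simp
  with knot_greatest(2)[of a] have "lderiv (convf p) (knot a) \<le> ereal (slope b)"
    by (rule order.trans)
  then show ?thesis using False ab knot_greatest by (simp add: plin_knot_def)
qed (use plin_knot_in_unit in \<open>simp add: plin_knot_def\<close>)

sublocale monotone_plin k knot slope
  using one_le_k plin_knot_mono slope_mono by unfold_locales auto

lemma convf_le_plin_at_knot:
  "j < k \<Longrightarrow> convf p (plin_knot knot j) \<le> plin k knot slope (plin_knot knot j)"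
proof (induction j)
  case 0
  then show ?case by (simp add: plin_knot_def convf_zero plin_def)
next
  case (Suc j)
  let ?w = "plin_knot knot j" and ?w' = "plin_knot knot (Suc j)"
  have seg: "on_segment (Suc j) ?w" "on_segment (Suc j) ?w'"
    using Suc.prems knot_mono[of j "Suc j"] by (auto simp: on_segment_def)
  have "convf p ?w' \<le> convf p ?w + slope (Suc j) * (?w' - ?w)"
  proof (cases "?w < ?w'")
    case True
    have "lderiv (convf p) ?w' \<le> ereal (slope (Suc j))"
      using knot_greatest(2)[of "Suc j"] by (simp add: plin_knot_def)
    from chord_le_of_lderiv_le[OF _ True this] show ?thesis
      using plin_knot_in_unit[of j] by simp
  qed (use knot_mono[of j "Suc j"] Suc.prems in simp)
  also have "\<dots> \<le> plin k knot slope ?w + slope (Suc j) * (?w' - ?w)" using Suc by simp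
  also have "\<dots> = plin_piece knot slope (Suc j) ?w'"
    using plin_eq_segment_piece[OF seg(1)] plin_knot_in_unit
      plin_piece_shift[of knot slope "Suc j" ?w' ?w] by simp
  also have "\<dots> = plin k knot slope ?w'"
    using plin_eq_segment_piece[OF seg(2)] plin_knot_in_unit by simp
  finally show ?case .
qed

definition segment_end :: "nat \<Rightarrow> real" where
  "segment_end l = (if l < k then knot l else 1)"

lemma on_segment_end: "l \<in> {1..k} \<Longrightarrow> on_segment l (segment_end l)"
  using plin_knot_in_unit[of "l - 1"] knot_mono[of "l - 1" l]
  by (auto simp: on_segment_def segment_end_def plin_knot_def)

lemma segment_end_in_unit: "segment_end l \<in> {0..1}"
  using knot_greatest(1) by (simp add: segment_end_def)

lemma segment_end_maximizes:
  assumes l: "l \<in> {1..k}" and y: "y \<in> {0..1}"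
  shows "slope l * y - plin k knot slope y
    \<le> slope l * segment_end l - plin k knot slope (segment_end l)"
proof -
  have "plin k knot slope (segment_end l) = plin_piece knot slope l (segment_end l)"
    using plin_eq_segment_piece[OF on_segment_end[OF l]] segment_end_in_unit by simp
  moreover have "plin_piece knot slope l y \<le> plin k knot slope y" using piece_le_plin y l by simp
  ultimately show ?thesis using plin_piece_shift[of knot slope l y "segment_end l"]
    by (simp add: right_diff_distrib)
qed

text \<open>A maximizer \<open>s\<close> of \<open>slope l * y - p y\<close> also maximizes \<open>slope l * y - convf p y\<close>, so the
  left derivative of \<open>convf p\<close> at \<open>s\<close> is at most \<open>slope l\<close> and \<open>s\<close> lies left of
  \<open>segment_end l\<close>; the supporting line through \<open>s\<close> then bounds \<open>p s\<close> by the value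
  of the piecewise-linear function at \<open>segment_end l\<close>.\<close>
lemma maximizer_price_le_segment_end:
  assumes l: "l \<in> {1..k}" and s: "s \<in> {0..1}"
    and max: "\<forall>y\<in>{0..1}. slope l * y - p y \<le> slope l * s - p s"
  shows "p s \<le> plin k knot slope (segment_end l)"
proof -
  let ?\<tau> = "slope l" and ?T = "segment_end l" and ?w = "plin_knot knot (l - 1)"
  have minorant: "\<forall>y\<in>{0..1}. - (?\<tau> * s - p s) + ?\<tau> * y \<le> p y" using max by force
  have support: "?\<tau> * y - (?\<tau> * s - p s) \<le> convf p y" if "y \<in> {0..1}" for y
    using convf_ge_affine_minorant[OF minorant that] by simp
  have "?\<tau> * y - convf p y \<le> ?\<tau> * s - convf p s" if "y \<in> {0..1}" for y
    using support[OF that] convf_le_self[OF s] by simp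
  then have "lderiv (convf p) s \<le> ereal ?\<tau>" using lderiv_le_of_maximizer[OF s] by blast
  then have "s \<le> ?T" using knot_greatest(3)[OF s] s by (simp add: segment_end_def)
  have "l - 1 < k" using l by auto
  have w_seg: "on_segment l ?w" using l knot_mono[of "l - 1" l] by (simp add: on_segment_def)
  have "p s \<le> convf p ?w + ?\<tau> * (s - ?w)"
    using support[OF plin_knot_in_unit, of "l - 1"] by (simp add: right_diff_distrib)
  also have "\<dots> \<le> convf p ?w + ?\<tau> * (?T - ?w)"
    using \<open>s \<le> ?T\<close> slope_nonneg[OF l] by (simp add: mult_left_mono)
  also have "\<dots> \<le> plin k knot slope ?w + ?\<tau> * (?T - ?w)"
    using convf_le_plin_at_knot[OF \<open>l - 1 < k\<close>] by simp
  also have "\<dots> = plin_piece knot slope l ?T"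
    using plin_eq_segment_piece[OF w_seg] plin_knot_in_unit plin_piece_shift[of knot slope l ?T ?w]
    by simp
  also have "\<dots> = plin k knot slope ?T"
    using plin_eq_segment_piece[OF on_segment_end[OF l]] segment_end_in_unit by simp
  finally show ?thesis .
qed

lemma exists_dominating_maximizer:
  assumes "\<tau> \<in> S"
  shows "\<exists>t\<in>{0..1}. (\<forall>y\<in>{0..1}. \<tau> * y - disc (convf p) S y \<le> \<tau> * t - disc (convf p) S t) \<and>
    (\<forall>s\<in>{0..1}. (\<forall>y\<in>{0..1}. \<tau> * y - p y \<le> \<tau> * s - p s) \<longrightarrow> p s \<le> disc (convf p) S t)"
proof -
  have "\<tau> \<in> slope ` {1..k}" unfolding slope_range by (rule assms)
  then obtain l where l: "l \<in> {1..k}" "slope l = \<tau>" by (auto simp: image_iff)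
  show ?thesis unfolding disc_eq_plin
  proof (rule bexI[of _ "segment_end l"], intro conjI ballI impI)
    show "\<tau> * y - plin k knot slope y \<le> \<tau> * segment_end l - plin k knot slope (segment_end l)"
      if "y \<in> {0..1}" for y
      using segment_end_maximizes[OF l(1) that] l(2) by simp
    show "p s \<le> plin k knot slope (segment_end l)"
      if "s \<in> {0..1}" "\<forall>y\<in>{0..1}. \<tau> * y - p y \<le> \<tau> * s - p s" for s
      using maximizer_price_le_segment_end[OF l(1)] that l(2) by simp
  qed (rule segment_end_in_unit)
qed

lemma disc_properties:
  "mono_on {0..1} (disc (convf p) S) \<and> continuous_on {0..1} (disc (convf p) S) \<and>
   convex_on {0..1} (disc (convf p) S) \<and> piecewise_linear (disc (convf p) S)"
proof -
  have "mono_on {0..} (plin k knot slope)"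
    using slope_nonneg[of 1] one_le_k by (intro plin_mono) auto
  then have "mono_on {0..1} (plin k knot slope)" by (rule mono_on_subset) auto
  moreover have "continuous_on {0..1} (plin k knot slope)"
    by (rule continuous_on_subset[OF plin_continuous]) auto
  moreover have "convex_on {0..1} (plin k knot slope)"
    by (rule convex_on_subset[OF plin_convex]) auto
  moreover have "piecewise_linear (plin k knot slope)"
    using knot_greatest(1) by (intro plin_piecewise_linear) auto
  ultimately show ?thesis unfolding disc_eq_plin by blast
qed

end

section \<open>Demand and revenue\<close>

abbreviation additive_price :: "nat \<Rightarrow> (nat \<Rightarrow> real \<Rightarrow> real) \<Rightarrow> (nat \<Rightarrow> real) \<Rightarrow> real" where
  "additive_price m q \<equiv> \<lambda>x. \<Sum>j<m. q j (x j)"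

abbreviation linear_valuation :: "nat \<Rightarrow> (nat \<Rightarrow> real) \<Rightarrow> (nat \<Rightarrow> real) \<Rightarrow> real" where
  "linear_valuation m \<tau> \<equiv> \<lambda>x. \<Sum>j<m. \<tau> j * x j"

lemma cube_eq_PiE: "cube m = (\<Pi>\<^sub>E j\<in>UNIV. if j < m then {0..1} else {0})"
  by (auto simp: cube_def PiE_iff split: if_splits)

lemma compact_cube: "compact (cube m)"
proof -
  have "compactin (product_topology (\<lambda>_. euclidean) UNIV)
      (\<Pi>\<^sub>E j\<in>UNIV. if j < m then {0..1::real} else {0})"
    by (auto simp: compactin_PiE)
  then show ?thesis by (simp add: cube_eq_PiE euclidean_product_topology)
qed

lemma lsc_on_additive_price:
  assumes "\<And>j. j < m \<Longrightarrow> lsc_on {0..1} (q j)"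
  shows "lsc_on (cube m) (additive_price m q)"
proof (rule lsc_on_sum)
  fix j assume "j \<in> {..<m}"
  then show "lsc_on (cube m) (\<lambda>x. q j (x j))"
    by (intro lsc_on_compose[OF assms] continuous_on_subset[OF continuous_on_product_coordinates])
      (auto simp: cube_def)
qed simp

lemma continuous_on_linear_valuation: "continuous_on (cube m) (linear_valuation m \<tau>)"
  by (intro continuous_intros continuous_on_subset[OF continuous_on_product_coordinates]) simp

lemma demand_attained:
  assumes P: "lsc_on (cube m) P" and V: "continuous_on (cube m) V" and F: "feasible P m b \<noteq> {}"
  shows "\<exists>x\<in>feasible P m b. \<forall>y\<in>feasible P m b. V y - P y \<le> V x - P x"
proof -
  have "closed (feasible P m b)"
    unfolding feasible_def by (rule closed_lsc_sublevel[OF P compact_imp_closed[OF compact_cube]])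
  moreover have "feasible P m b = cube m \<inter> feasible P m b" by (auto simp: feasible_def)
  ultimately have "compact (feasible P m b)" by (metis compact_Int_closed compact_cube)
  moreover have "lsc_on (feasible P m b) (\<lambda>x. P x + - V x)"
    using lsc_on_add[OF P continuous_on_imp_lsc_on[OF continuous_on_minus[OF V]]]
    by (rule lsc_on_subset) (auto simp: feasible_def)
  ultimately obtain x where "x \<in> feasible P m b" "\<forall>y\<in>feasible P m b. P x - V x \<le> P y - V y"
    using lsc_on_attains_inf F by fastforce
  then show ?thesis by (metis minus_diff_eq neg_le_iff_le)
qed

lemma Dem_eq_maximizers:
  assumes "\<exists>x\<in>feasible P m b. \<forall>y\<in>feasible P m b. V y - P y \<le> V x - P x"
  shows "Dem P V m b = {x\<in>feasible P m b. \<forall>y\<in>feasible P m b. V y - P y \<le> V x - P x}"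
proof -
  obtain x where x: "x \<in> feasible P m b" "\<forall>y\<in>feasible P m b. V y - P y \<le> V x - P x"
    using assms by blast
  have "ustar P V m b = V x - P x"
    unfolding ustar_def using x by (intro cSup_eq_maximum) auto
  then show ?thesis using x unfolding Dem_def by (auto intro: order.antisym)
qed

lemma revenue_le:
  "Dem P V m b \<noteq> {} \<Longrightarrow> (\<And>x. x \<in> Dem P V m b \<Longrightarrow> P x \<le> c) \<Longrightarrow> revenue P V m b \<le> c"
  unfolding revenue_def by (rule cSUP_least)

lemma price_le_revenue: "x \<in> Dem P V m b \<Longrightarrow> P x \<le> revenue P V m b"
  unfolding revenue_def
  by (rule cSUP_upper) (auto simp: Dem_def feasible_def intro: bdd_aboveI[where M=b])

lemma additive_price_fun_upd:
  "j < m \<Longrightarrow> additive_price m q (x(j := y)) = additive_price m q x - q j (x j) + q j y"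
  by (simp add: sum.remove[of "{..<m}" j]
      sum.cong[of "{..<m} - {j}" _ "\<lambda>i. q i ((x(j := y)) i)" "\<lambda>i. q i (x i)"])

lemma maximizer_coordinate:
  fixes q :: "nat \<Rightarrow> real \<Rightarrow> real"
  assumes max: "\<forall>z\<in>feasible (additive_price m q) m b.
      linear_valuation m \<tau> z - additive_price m q z \<le> linear_valuation m \<tau> x - additive_price m q x"
    and x: "x \<in> cube m" and j: "j < m" and y: "y \<in> {0..1}"
    and budget: "additive_price m q x - q j (x j) + q j y \<le> b"
  shows "\<tau> j * y - q j y \<le> \<tau> j * x j - q j (x j)"
proof -
  have "x(j := y) \<in> feasible (additive_price m q) m b"
    using x y j budget additive_price_fun_upd[OF j, of q x y] by (auto simp: cube_def feasible_def)
  then show ?thesis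
    using max additive_price_fun_upd[OF j, of q x y]
      additive_price_fun_upd[OF j, of "\<lambda>j v. \<tau> j * v" x y]
    by fastforce
qed

lemma segment_in_cube:
  assumes "x \<in> cube m" "t \<in> cube m" "s \<in> {0..1}"
  shows "(\<lambda>j. (1 - s) * x j + s * t j) \<in> cube m"
proof -
  have "(1 - s) * u + s * v \<in> {0..1}" if "u \<in> {0..1}" "v \<in> {0..1}" for u v
    using convexD[OF convex_real_interval(5)[of 0 1], of u v "1 - s" s] that assms(3) by simp
  then show ?thesis using assms by (simp add: cube_def)
qed

lemma additive_utility_concave:
  assumes h: "\<And>j. j < m \<Longrightarrow> convex_on {0..1} (h j)"
    and x: "x \<in> cube m" and t: "t \<in> cube m" and s: "s \<in> {0..1}"
  defines "y \<equiv> \<lambda>j. (1 - s) * x j + s * t j"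
  shows "(1 - s) * (linear_valuation m \<tau> x - additive_price m h x)
      + s * (linear_valuation m \<tau> t - additive_price m h t)
    \<le> linear_valuation m \<tau> y - additive_price m h y"
proof -
  have "h j (y j) \<le> (1 - s) * h j (x j) + s * h j (t j)" if "j < m" for j
    using convex_onD[OF h[OF that], of s "x j" "t j"] x t s that by (auto simp: cube_def y_def)
  then have "additive_price m h y \<le> (1 - s) * additive_price m h x + s * additive_price m h t"
    by (simp add: sum_distrib_left flip: sum.distrib) (rule sum_mono, simp)
  moreover have "linear_valuation m \<tau> y
      = (1 - s) * linear_valuation m \<tau> x + s * linear_valuation m \<tau> t"
    unfolding y_def sum_distrib_left sum.distrib[symmetric]
    by (intro sum.cong) (simp_all add: algebra_simps)
  ultimately show ?thesis by (simp add: algebra_simps)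
qed

lemma coordinatewise_maximizer:
  assumes t: "\<And>j. j < m \<Longrightarrow> \<forall>y\<in>{0..1}. \<tau> j * y - h j y \<le> \<tau> j * t j - h j (t j)" and x: "x \<in> cube m"
  shows "linear_valuation m \<tau> x - additive_price m h x
    \<le> linear_valuation m \<tau> t - additive_price m h t"
  using t x by (simp add: cube_def flip: sum_subtractf) (rule sum_mono, simp)

text \<open>Walk from a demanded bundle \<open>x\<close> towards the unconstrained optimum \<open>t\<close> until the budget
  binds; the utility is concave along the segment, so the bundle reached is still demanded.\<close>
lemma demanded_bundle_on_budget:
  fixes h :: "nat \<Rightarrow> real \<Rightarrow> real"
  assumes h: "\<And>j. j < m \<Longrightarrow> continuous_on {0..1} (h j) \<and> convex_on {0..1} (h j)"
    and t: "t \<in> cube m"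
    and t_max: "\<forall>z\<in>cube m. linear_valuation m \<tau> z - additive_price m h z
      \<le> linear_valuation m \<tau> t - additive_price m h t"
    and x: "x \<in> feasible (additive_price m h) m b"
    and x_max: "\<forall>z\<in>feasible (additive_price m h) m b. linear_valuation m \<tau> z - additive_price m h z
      \<le> linear_valuation m \<tau> x - additive_price m h x"
    and over: "b < additive_price m h t"
  obtains y where "y \<in> feasible (additive_price m h) m b" "additive_price m h y = b"
    "\<forall>z\<in>feasible (additive_price m h) m b. linear_valuation m \<tau> z - additive_price m h z
      \<le> linear_valuation m \<tau> y - additive_price m h y"
proof -
  let ?H = "additive_price m h" and ?V = "linear_valuation m \<tau>"
  have "x \<in> cube m" using x by (simp add: feasible_def)
  define y where "y s = (\<lambda>j. (1 - s) * x j + s * t j)" for s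
  have "continuous_on {0..1} (\<lambda>s. h j (y s j))" if "j < m" for j
  proof (rule continuous_on_compose2[of "{0..1}" "h j"])
    show "continuous_on {0..1} (h j)" using h that by blast
    show "(\<lambda>s. y s j) ` {0..1} \<subseteq> {0..1}"
      using segment_in_cube[OF \<open>x \<in> cube m\<close> t] that by (auto simp: y_def cube_def)
  qed (auto simp: y_def intro!: continuous_intros)
  then have "continuous_on {0..1} (\<lambda>s. ?H (y s))" by (auto intro: continuous_on_sum)
  then obtain s where s: "s \<in> {0..1}" "?H (y s) = b"
    using IVT'[of "\<lambda>s. ?H (y s)" 0 b 1] x over by (auto simp: y_def feasible_def)
  have "y s \<in> feasible ?H m b"
    using segment_in_cube[OF \<open>x \<in> cube m\<close> t s(1)] s by (simp add: feasible_def y_def)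
  moreover have "?V x - ?H x \<le> ?V (y s) - ?H (y s)"
  proof -
    have "s * (?V x - ?H x) \<le> s * (?V t - ?H t)"
      using t_max \<open>x \<in> cube m\<close> s(1) by (intro mult_left_mono) auto
    then have "?V x - ?H x \<le> (1 - s) * (?V x - ?H x) + s * (?V t - ?H t)"
      by (simp add: left_diff_distrib)
    also have "\<dots> \<le> ?V (y s) - ?H (y s)"
      using additive_utility_concave[OF _ \<open>x \<in> cube m\<close> t s(1), of h \<tau>] h by (simp add: y_def)
    finally show ?thesis .
  qed
  ultimately show thesis using that s(2) x_max by fastforce
qed

lemma revenue_ge_min_budget:
  fixes h :: "nat \<Rightarrow> real \<Rightarrow> real"
  assumes h: "\<And>j. j < m \<Longrightarrow> continuous_on {0..1} (h j) \<and> convex_on {0..1} (h j) \<and> h j 0 = 0"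
    and t: "t \<in> cube m"
    and t_max: "\<And>j. j < m \<Longrightarrow> \<forall>y\<in>{0..1}. \<tau> j * y - h j y \<le> \<tau> j * t j - h j (t j)"
    and b: "0 \<le> b"
  shows "min b (additive_price m h t) \<le> revenue (additive_price m h) (linear_valuation m \<tau>) m b"
proof -
  let ?H = "additive_price m h" and ?V = "linear_valuation m \<tau>"
  let ?F = "feasible (additive_price m h) m b"
  have "(\<lambda>_. 0) \<in> ?F" using h b by (simp add: feasible_def cube_def)
  then have exists: "\<exists>x\<in>?F. \<forall>y\<in>?F. ?V y - ?H y \<le> ?V x - ?H x"
    using h by (intro demand_attained lsc_on_additive_price continuous_on_imp_lsc_on
        continuous_on_linear_valuation) auto
  have Dem: "Dem ?H ?V m b = {x\<in>?F. \<forall>y\<in>?F. ?V y - ?H y \<le> ?V x - ?H x}"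
    by (rule Dem_eq_maximizers[OF exists])
  have t_max': "\<forall>z\<in>cube m. ?V z - ?H z \<le> ?V t - ?H t"
    using coordinatewise_maximizer[where \<tau>=\<tau> and h=h and t=t, OF t_max] by blast
  show ?thesis
  proof (cases "?H t \<le> b")
    case True
    then have "t \<in> Dem ?H ?V m b" using t t_max' by (auto simp: Dem feasible_def)
    then show ?thesis using price_le_revenue min.coboundedI2 by blast
  next
    case False
    obtain x where x: "x \<in> ?F" "\<forall>y\<in>?F. ?V y - ?H y \<le> ?V x - ?H x" using exists by blast
    have "\<And>j. j < m \<Longrightarrow> continuous_on {0..1} (h j) \<and> convex_on {0..1} (h j)" using h by blast
    moreover have "b < ?H t" using False by simp
    ultimately obtain y where "y \<in> ?F" "?H y = b" "\<forall>z\<in>?F. ?V z - ?H z \<le> ?V y - ?H y"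
      using demanded_bundle_on_budget[OF _ t t_max' x] by blast
    then have "y \<in> Dem ?H ?V m b" "?H y = b" by (simp_all add: Dem)
    then have "b \<le> revenue ?H ?V m b" using price_le_revenue[OF \<open>y \<in> Dem ?H ?V m b\<close>] by simp
    then show ?thesis by (rule min.coboundedI1)
  qed
qed

lemma demanded_price_le:
  fixes q h :: "nat \<Rightarrow> real \<Rightarrow> real"
  assumes q: "\<And>j. j < m \<Longrightarrow> mono_on {0..1} (q j) \<and> lsc_on {0..1} (q j)"
    and dom: "\<And>j. j < m \<Longrightarrow>
      \<forall>s\<in>{0..1}. (\<forall>y\<in>{0..1}. \<tau> j * y - q j y \<le> \<tau> j * s - q j s) \<longrightarrow> q j s \<le> h j (t j)"
    and x: "x \<in> feasible (additive_price m q) m b"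
    and max: "\<forall>z\<in>feasible (additive_price m q) m b.
      linear_valuation m \<tau> z - additive_price m q z \<le> linear_valuation m \<tau> x - additive_price m q x"
  shows "additive_price m q x \<le> additive_price m h t"
proof (rule sum_mono)
  fix j assume "j \<in> {..<m}"
  then have j: "j < m" by simp
  have xc: "x \<in> cube m" and xb: "additive_price m q x \<le> b" using x by (auto simp: feasible_def)
  then have xj: "x j \<in> {0..1}" using j by (simp add: cube_def)
  have mono: "mono_on {0..1} (q j)" using q[OF j] by blast
  have "lsc_on {0..1} (\<lambda>y. q j y + - (\<tau> j * y))"
    using q[OF j] by (intro lsc_on_add[OF _ continuous_on_imp_lsc_on] continuous_intros) auto
  then obtain s where s: "s \<in> {0..1}" "\<forall>y\<in>{0..1}. q j s + - (\<tau> j * s) \<le> q j y + - (\<tau> j * y)"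
    using lsc_on_attains_inf[of "{0..1::real}" "\<lambda>y. q j y + - (\<tau> j * y)"] by auto
  have s_max: "\<tau> j * y - q j y \<le> \<tau> j * s - q j s" if "y \<in> {0..1}" for y
    using s(2) that by fastforce
  show "q j (x j) \<le> h j (t j)"
  proof (cases "s \<le> x j")
    case True
    text \<open>Lowering coordinate \<open>j\<close> to \<open>s\<close> keeps the bundle affordable, so \<open>x j\<close> is itself
      a maximizer of the coordinate utility.\<close>
    have "q j s \<le> q j (x j)" using mono_onD[OF mono s(1) xj True] .
    then have "additive_price m q x - q j (x j) + q j s \<le> b" using xb by linarith
    from maximizer_coordinate[OF max xc j s(1) this]
    have "\<tau> j * y - q j y \<le> \<tau> j * x j - q j (x j)" if "y \<in> {0..1}" for y
      using s_max[OF that] by linarith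
    then show ?thesis using dom[OF j] xj by blast
  next
    case False
    then have "q j (x j) \<le> q j s" using mono_onD[OF mono xj s(1)] by simp
    also have "\<dots> \<le> h j (t j)" using dom[OF j] s(1) s_max by blast
    finally show ?thesis .
  qed
qed

theorem revenue_le_revenue_of_dominating:
  fixes q h :: "nat \<Rightarrow> real \<Rightarrow> real"
  assumes q: "\<And>j. j < m \<Longrightarrow> mono_on {0..1} (q j) \<and> q j 0 = 0 \<and> lsc_on {0..1} (q j)"
    and h: "\<And>j. j < m \<Longrightarrow> continuous_on {0..1} (h j) \<and> convex_on {0..1} (h j) \<and> h j 0 = 0"
    and dom: "\<And>j. j < m \<Longrightarrow> \<exists>t\<in>{0..1}. (\<forall>y\<in>{0..1}. \<tau> j * y - h j y \<le> \<tau> j * t - h j t) \<and>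
      (\<forall>s\<in>{0..1}. (\<forall>y\<in>{0..1}. \<tau> j * y - q j y \<le> \<tau> j * s - q j s) \<longrightarrow> q j s \<le> h j t)"
    and b: "0 \<le> b"
  shows "revenue (additive_price m q) (linear_valuation m \<tau>) m b
    \<le> revenue (additive_price m h) (linear_valuation m \<tau>) m b"
proof -
  let ?P = "additive_price m q" and ?V = "linear_valuation m \<tau>"
  let ?F = "feasible (additive_price m q) m b"
  obtain T where T: "\<And>j. j < m \<Longrightarrow> T j \<in> {0..1} \<and>
      (\<forall>y\<in>{0..1}. \<tau> j * y - h j y \<le> \<tau> j * T j - h j (T j)) \<and>
      (\<forall>s\<in>{0..1}. (\<forall>y\<in>{0..1}. \<tau> j * y - q j y \<le> \<tau> j * s - q j s) \<longrightarrow> q j s \<le> h j (T j))"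
    using dom by metis
  define t where "t j = (if j < m then T j else 0)" for j
  have t: "t \<in> cube m" using T by (simp add: t_def cube_def)
  have "(\<lambda>_. 0) \<in> ?F" using q b by (simp add: feasible_def cube_def)
  then have exists: "\<exists>x\<in>?F. \<forall>y\<in>?F. ?V y - ?P y \<le> ?V x - ?P x"
    using q by (intro demand_attained lsc_on_additive_price continuous_on_linear_valuation) auto
  then have "Dem ?P ?V m b \<noteq> {}" unfolding Dem_eq_maximizers[OF exists] by blast
  moreover have "?P x \<le> additive_price m h t" if "x \<in> Dem ?P ?V m b" for x
    using that q T unfolding Dem_eq_maximizers[OF exists]
    by (intro demanded_price_le[where \<tau>=\<tau> and b=b]) (auto simp: t_def)
  ultimately have "revenue ?P ?V m b \<le> min b (additive_price m h t)"
    by (intro revenue_le) (auto simp: Dem_def feasible_def)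
  also have "\<dots> \<le> revenue (additive_price m h) ?V m b"
    using h T b by (intro revenue_ge_min_budget[OF _ t]) (auto simp: t_def)
  finally show ?thesis .
qed

theorem mainTheorem2:
  fixes n m :: nat and b :: "nat \<Rightarrow> real" and \<tau> :: "nat \<Rightarrow> nat \<Rightarrow> real"
    and p :: "nat \<Rightarrow> real \<Rightarrow> real" and phat :: "nat \<Rightarrow> real \<Rightarrow> real"
  assumes n_pos: "0 < n"
    and b_nonneg: "\<forall>i<n. 0 \<le> b i"
    and tau_nonneg: "\<forall>i<n. \<forall>j<m. 0 \<le> \<tau> i j"
    and p_mono: "\<forall>j<m. mono_on {0..1} (p j)"
    and p_zero: "\<forall>j<m. p j 0 = 0"
    and p_nonneg: "\<forall>j<m. \<forall>x\<in>{0..1}. 0 \<le> p j x"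
    and p_lc: "\<forall>j<m. lower_cont (p j)"
    and phat_def: "phat = (\<lambda>j. disc (convf (p j)) {\<tau> i j | i. i < n})"
  shows "(\<forall>i<n. revenue (\<lambda>x. \<Sum>j<m. phat j (x j)) (\<lambda>x. \<Sum>j<m. \<tau> i j * x j) m (b i)
              \<ge> revenue (\<lambda>x. \<Sum>j<m. p j (x j)) (\<lambda>x. \<Sum>j<m. \<tau> i j * x j) m (b i))
       \<and> (\<forall>j<m. mono_on {0..1} (phat j) \<and> continuous_on {0..1} (phat j)
              \<and> convex_on {0..1} (phat j) \<and> piecewise_linear (phat j))"
proof -
  define S where "S j = {\<tau> i j | i. i < n}" for j
  have linearized: "linearized_pricing (p j) (S j)" if "j < m" for j
  proof
    have "S j = (\<lambda>i. \<tau> i j) ` {..<n}" by (auto simp: S_def)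
    then show "finite (S j)" "S j \<noteq> {}" "\<forall>a\<in>S j. 0 \<le> a"
      using n_pos tau_nonneg that by auto
  qed (use p_mono p_zero p_lc that in auto)
  have phat_eq: "phat j = disc (convf (p j)) (S j)" for j by (simp add: phat_def S_def)
  have shape: "\<forall>j<m. mono_on {0..1} (phat j) \<and> continuous_on {0..1} (phat j)
      \<and> convex_on {0..1} (phat j) \<and> piecewise_linear (phat j)"
    using linearized_pricing.disc_properties[OF linearized] by (simp add: phat_eq)
  have "revenue (additive_price m p) (linear_valuation m (\<tau> i)) m (b i)
      \<le> revenue (additive_price m phat) (linear_valuation m (\<tau> i)) m (b i)" if i: "i < n" for i
  proof (rule revenue_le_revenue_of_dominating)
    fix j assume j: "j < m"
    interpret linearized_pricing "p j" "S j" by (rule linearized[OF j])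
    show "mono_on {0..1} (p j) \<and> p j 0 = 0 \<and> lsc_on {0..1} (p j)" using mono zero lsc by blast
    show "continuous_on {0..1} (phat j) \<and> convex_on {0..1} (phat j) \<and> phat j 0 = 0"
      using disc_properties disc_zero by (simp add: phat_eq)
    show "\<exists>t\<in>{0..1}. (\<forall>y\<in>{0..1}. \<tau> i j * y - phat j y \<le> \<tau> i j * t - phat j t) \<and>
        (\<forall>s\<in>{0..1}. (\<forall>y\<in>{0..1}. \<tau> i j * y - p j y \<le> \<tau> i j * s - p j s) \<longrightarrow> p j s \<le> phat j t)"
      unfolding phat_eq using i by (intro exists_dominating_maximizer) (auto simp: S_def)
  qed (use b_nonneg i in simp)
  with shape show ?thesis by simp
qed

end
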